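(* Let $n\ge 2$, $\lambda>0$, let $M$ be one of the listed symmetric spaces with associated function $\mathcal D_M$, and let $0<r<r_{max}(M)$. Let $h_r$ be the (unique) solution on $[0,r)$, real-analytic as a function of $u^2$, of $$h_r''(u)\,(h_r'(u))^{n-1}=e^{\lambda h_r(u)}\mathcal D_M(u),\quad u\in[0,r),\qquad \lim_{u\to r}h_r(u)=\infty.$$ Then: (1) $h_r'(u)>0$ and $h_r''(u)>0$ for all $u\in(0,r)$, and $\inf_{[0,r)}h_r=h_r(0)$; (2) $h_r'(0)=0$; (3) $h_r'(t)=\big(\int_0^t n e^{\lambda h_r(u)}\mathcal D_M(u)\,du\big)^{1/n}$ for all $t\in(0,r)$; (4) $\lim_{u\to r}h_r'(u)=\infty$ and $\lim_{u\to r}h_r''(u)=\infty$.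
   Context: For a real-analytic Riemannian manifold $M$ of real dimension $n$, the Grauert tube $T^rM=\{(x,v)\in TM:|v|<r/2\}$ carries the adapted complex structure (defined for $r<r_{max}(M)$), $\rho(x,v)=4|v|^2$ and $u=\sqrt\rho$. The functions are: $\mathcal D(u)=u^{n-1}$ for $M=\mathbb R^n$ ($r_{max}=\infty$); $\mathcal D(u)=(\sin u)^{n-1}$ for real hyperbolic space $H^n$ ($r_{max}=\pi$); $\mathcal D(u)=(\sinh u)^{n-1}$ for the round sphere and real projective space; $\mathcal D(u)=2^{n-1}(\cosh\frac u2)^k(\sinh\frac u2)^{n-1}$ with $k=1,3,7$ for the complex projective space, quaternionic projective space, and Cayley plane respectively ($r_{max}=\infty$ for compact rank-one spaces). In all cases $\mathcal D_M\ge0$ with $\mathcal D_M(u)=0$ iff $u=0$, $\mathcal D_M^{1/(n-1)}(0)=0$ and $(\mathcal D_M^{1/(n-1)})'(0)=1$. The function $h_r(u)$ (as a function on $T^rM$ through $u=\sqrt\rho$) is a Kähler potential for the complete Kähler–Einstein metric of Ricci curvature $-\lambda$ on $T^rM$. *)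

theory Defs
  imports "HOL-Analysis.Analysis"
begin

datatype symspace = Euclidean | RealHyperbolic | RoundSphere | RealProjective
  | ComplexProjective | QuaternionicProjective | CayleyPlane

fun valid_dim :: "symspace \<Rightarrow> nat \<Rightarrow> bool" where
  "valid_dim ComplexProjective n = even n"
| "valid_dim QuaternionicProjective n = (4 dvd n)"
| "valid_dim CayleyPlane n = (n = 16)"
| "valid_dim _ n = True"

fun D_M :: "symspace \<Rightarrow> nat \<Rightarrow> real \<Rightarrow> real" where
  "D_M Euclidean n u = u ^ (n - 1)"
| "D_M RealHyperbolic n u = (sin u) ^ (n - 1)"
| "D_M RoundSphere n u = (sinh u) ^ (n - 1)"
| "D_M RealProjective n u = (sinh u) ^ (n - 1)"
| "D_M ComplexProjective n u = 2 ^ (n - 1) * (cosh (u/2)) ^ 1 * (sinh (u/2)) ^ (n - 1)"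
| "D_M QuaternionicProjective n u = 2 ^ (n - 1) * (cosh (u/2)) ^ 3 * (sinh (u/2)) ^ (n - 1)"
| "D_M CayleyPlane n u = 2 ^ (n - 1) * (cosh (u/2)) ^ 7 * (sinh (u/2)) ^ (n - 1)"

fun r_max :: "symspace \<Rightarrow> ereal" where
  "r_max RealHyperbolic = ereal pi"
| "r_max _ = \<infinity>"

definition real_analytic_on :: "(real \<Rightarrow> real) \<Rightarrow> real set \<Rightarrow> bool" where
  "real_analytic_on g S \<longleftrightarrow>
     (\<forall>x\<in>S. \<exists>e>0. \<exists>c::nat \<Rightarrow> real. \<forall>y. \<bar>y - x\<bar> < e \<longrightarrow> (\<lambda>k. c k * (y - x) ^ k) sums g y)"

end

theory Submission
  imports Defs
begin

(*
  The argument only uses two properties of D: it is continuous on [0, r] and positive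
  on (0, r]; it also works for every n >= 1.  It is therefore carried out in the locale blowup_solution for an arbitrary
  such D, assuming in addition h'(0) = 0.  The key observation is that the ODE says
  (h'^n)' = n e^(lam h) D, so h'^n is the integral of a positive function:
  this gives h' /= 0 on (0, r), and since h' < 0 somewhere would make h decreasing
  and hence bounded near r, contradicting the blow-up, h' > 0; then h'' > 0 by the ODE.
  If h' were bounded, h would be bounded, so h' -> oo.  Comparing
  c e^(lam h) - h'^(n+1) (non-decreasing for c = (n+1) max D / lam) gives
  h'^(n+1) <= c e^(lam h), which together with the ODE and D(r) > 0 yields
  h'' >= const * h'^2 near r, so h'' -> oo.

  The theorem then follows: D_M is continuous and positive on (0, r_max), and
  h'(0) = 0 holds because h is a differentiable function of u^2.
*)

section \<open>Calculus on a half-open interval\<close>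

lemma mvt_halfopen:
  fixes f f' :: "real \<Rightarrow> real"
  assumes deriv: "\<forall>u\<in>{l..<r}. (f has_real_derivative f' u) (at u within {l..<r})"
    and ab: "l \<le> a" "a < b" "b < r"
  shows "\<exists>z. a < z \<and> z < b \<and> f b - f a = (b - a) * f' z"
proof -
  have "continuous_on {l..<r} f"
    using deriv by (meson DERIV_continuous continuous_on_eq_continuous_within)
  then have cont: "continuous_on {a..b} f"
    by (rule continuous_on_subset) (use ab in auto)
  have deriv_at: "(f has_real_derivative f' x) (at x)" if "a < x" "x < b" for x
  proof -
    have "x \<in> interior {l..<r}"
      using that ab by simp
    then have "at x within {l..<r} = at x"
      by (rule at_within_interior)
    moreover have "(f has_real_derivative f' x) (at x within {l..<r})"
      using deriv that ab by auto
    ultimately show ?thesis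
      by simp
  qed
  obtain z d where z: "a < z" "z < b" "(f has_real_derivative d) (at z)" "f b - f a = (b - a) * d"
    using MVT[OF ab(2) cont] deriv_at real_differentiable_def by blast
  have "d = f' z"
    using DERIV_unique[OF z(3) deriv_at[OF z(1,2)]] .
  then show ?thesis
    using z by blast
qed

lemma mono_halfopen:
  fixes f f' :: "real \<Rightarrow> real"
  assumes deriv: "\<forall>u\<in>{l..<r}. (f has_real_derivative f' u) (at u within {l..<r})"
    and nonneg: "\<forall>z\<in>{a<..<b}. f' z \<ge> 0"
    and ab: "l \<le> a" "a \<le> b" "b < r"
  shows "f a \<le> f b"
proof (cases "a = b")
  case False
  then obtain z where z: "a < z" "z < b" "f b - f a = (b - a) * f' z"
    using mvt_halfopen[OF deriv] ab by force
  then have "(b - a) * f' z \<ge> 0"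
    using nonneg by simp
  then show ?thesis
    using z by simp
qed simp

lemma blowup_unbounded:
  fixes h :: "real \<Rightarrow> real"
  assumes blowup: "filterlim h at_top (at_left r)" and "c < r"
  shows "\<exists>u\<in>{c..<r}. h u > C"
proof -
  have "\<forall>\<^sub>F x in at_left r. C + 1 \<le> h x \<and> x \<in> {c<..<r}"
    using blowup eventually_at_left_real[OF \<open>c < r\<close>]
    by (auto simp: filterlim_at_top intro: eventually_conj)
  then obtain x where "C + 1 \<le> h x" "x \<in> {c<..<r}"
    using eventually_happens'[OF trivial_limit_at_left_real] by blast
  then show ?thesis
    by (intro bexI[of _ x]) auto
qed

section \<open>Functions of the square of the variable\<close>

text \<open>A real-analytic function is differentiable at every point of its domain
  (term-wise differentiation of the local power series).\<close>
lemma real_analytic_on_imp_DERIV: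
  assumes "real_analytic_on g S" "x \<in> S"
  shows "\<exists>g'. (g has_real_derivative g') (at x)"
proof -
  obtain e c where e: "e > 0"
    and series: "\<And>y. \<bar>y - x\<bar> < e \<Longrightarrow> (\<lambda>k. c k * (y - x) ^ k) sums g y"
    using assms unfolding real_analytic_on_def by blast
  define P where "P z = (\<Sum>k. c k * z ^ k)" for z :: real
  have "summable (\<lambda>k. c k * (e / 2) ^ k)"
    using series[of "x + e / 2"] e by (simp add: sums_summable)
  then have "(P has_real_derivative (\<Sum>k. diffs c k * 0 ^ k)) (at 0)"
    unfolding P_def using termdiffs_strong[of c "e / 2" 0] e by simp
  moreover have "((\<lambda>y. y - x) has_real_derivative 1) (at x)"
    by (auto intro!: derivative_eq_intros)
  ultimately have shifted: "((\<lambda>y. P (y - x)) has_real_derivative (\<Sum>k. diffs c k * 0 ^ k)) (at x)"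
    using DERIV_chain2[of P "(\<Sum>k. diffs c k * 0 ^ k)" "\<lambda>y. y - x" x 1] by simp
  have agree: "P (y - x) = g y" if "y \<in> ball x e" for y
    using series[of y] that sums_unique unfolding P_def by (force simp: dist_real_def abs_minus_commute)
  have "(g has_real_derivative (\<Sum>k. diffs c k * 0 ^ k)) (at x)"
    using has_field_derivative_transform_within_open[OF shifted open_ball, of x e g] agree e by simp
  then show ?thesis ..
qed

lemma deriv_zero_of_square_composition:
  fixes g h :: "real \<Rightarrow> real"
  assumes g: "(g has_real_derivative g0) (at 0)"
    and h: "\<forall>u\<in>{0..<r}. h u = g (u\<^sup>2)" and "0 < r"
    and h_deriv: "(h has_real_derivative d) (at 0 within {0..<r})"
  shows "d = 0"
proof -
  have "((\<lambda>u. u\<^sup>2) has_real_derivative 0) (at 0 within {0..<r})"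
    by (auto intro!: derivative_eq_intros)
  with g have "((\<lambda>u. g (u\<^sup>2)) has_real_derivative 0) (at 0 within {0..<r})"
    using DERIV_chain2[of g g0 "\<lambda>u. u\<^sup>2" 0 0 "{0..<r}"] by simp
  then have zero: "(h has_real_derivative 0) (at 0 within {0..<r})"
    by (rule has_field_derivative_transform_within[of _ _ _ _ 1]) (use h \<open>0 < r\<close> in auto)
  have "{0..<r} - {0} = {0<..<r}"
    by auto
  then have "at 0 within {0..<r} \<noteq> bot"
    using \<open>0 < r\<close> by (simp add: at_within_eq_bot_iff closure_greaterThanLessThan)
  then show ?thesis
    using h_deriv zero tendsto_unique unfolding has_field_derivative_iff by blast
qed

section \<open>Blow-up solutions of the ODE\<close>

locale blowup_solution =
  fixes n :: nat and lam r :: real and D h h' h'' :: "real \<Rightarrow> real"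
  assumes n: "n \<ge> 1" and lam: "lam > 0" and r: "r > 0"
    and D_cont: "continuous_on {0..r} D"
    and D_pos: "\<And>u. 0 < u \<Longrightarrow> u \<le> r \<Longrightarrow> D u > 0"
    and d1: "\<forall>u\<in>{0..<r}. (h has_real_derivative h' u) (at u within {0..<r})"
    and d2: "\<forall>u\<in>{0..<r}. (h' has_real_derivative h'' u) (at u within {0..<r})"
    and ode: "\<forall>u\<in>{0..<r}. h'' u * (h' u) ^ (n - 1) = exp (lam * h u) * D u"
    and blowup: "filterlim h at_top (at_left r)"
    and h'_0: "h' 0 = 0"
begin

lemma h'_power_deriv:
  "\<forall>u\<in>{0..<r}. ((\<lambda>v. h' v ^ n) has_real_derivative real n * exp (lam * h u) * D u)
     (at u within {0..<r})"
proof
  fix u assume u: "u \<in> {0..<r}"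
  have "((\<lambda>v. h' v ^ n) has_real_derivative real n * h' u ^ (n - 1) * h'' u) (at u within {0..<r})"
    using d2 u by (auto intro!: derivative_eq_intros)
  then show "((\<lambda>v. h' v ^ n) has_real_derivative real n * exp (lam * h u) * D u)
     (at u within {0..<r})"
    by (rule DERIV_cong) (use ode u in \<open>metis mult.assoc mult.commute\<close>)
qed

lemma h'_power_integral:
  assumes t: "t \<in> {0..<r}"
  shows "integral {0..t} (\<lambda>u. real n * exp (lam * h u) * D u) = h' t ^ n"
proof -
  have "((\<lambda>u. real n * exp (lam * h u) * D u) has_integral (h' t ^ n - h' 0 ^ n)) {0..t}"
  proof (rule fundamental_theorem_of_calculus)
    fix x assume x: "x \<in> {0..t}"
    have "((\<lambda>v. h' v ^ n) has_real_derivative real n * exp (lam * h x) * D x) (at x within {0..t})"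
      by (rule DERIV_subset[of _ _ _ "{0..<r}"]) (use h'_power_deriv x t in auto)
    then show "((\<lambda>v. h' v ^ n) has_vector_derivative real n * exp (lam * h x) * D x)
        (at x within {0..t})"
      by (simp add: has_real_derivative_iff_has_vector_derivative)
  qed (use t in simp)
  then show ?thesis
    using h'_0 n by (simp add: integral_unique power_0_left)
qed

lemma h'_nonzero:
  assumes u: "u \<in> {0<..<r}"
  shows "h' u \<noteq> 0"
proof -
  obtain z where z: "0 < z" "z < u" "h' u ^ n - h' 0 ^ n = (u - 0) * (real n * exp (lam * h z) * D z)"
    using mvt_halfopen[OF h'_power_deriv, of 0 u] u by auto
  have "(u - 0) * (real n * exp (lam * h z) * D z) > 0"
    using z u n D_pos[of z] by simp
  then have "h' u ^ n > 0"
    using z(3) h'_0 n by (simp add: power_0_left)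
  then show ?thesis
    using n by (auto simp: power_0_left)
qed

text \<open>If h' were negative somewhere, by continuity it would stay negative up to
  r, so h would be bounded there.\<close>
lemma h'_pos:
  assumes u: "u \<in> {0<..<r}"
  shows "h' u > 0"
proof (rule ccontr)
  assume "\<not> h' u > 0"
  then have neg_u: "h' u < 0"
    using h'_nonzero[OF u] by linarith
  have h'_cont: "continuous_on {0..<r} h'"
    using d2 by (meson DERIV_continuous continuous_on_eq_continuous_within)
  have neg: "h' z < 0" if z: "z \<in> {u..<r}" for z
  proof (rule ccontr)
    assume "\<not> h' z < 0"
    moreover have "continuous_on {u..z} h'"
      using h'_cont by (rule continuous_on_subset) (use u z in auto)
    ultimately obtain x where "u \<le> x" "x \<le> z" "h' x = 0"
      using IVT'[of h' u 0 z] neg_u z by auto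
    then show False
      using h'_nonzero[of x] u z by auto
  qed
  have minus_deriv: "\<forall>v\<in>{0..<r}. ((\<lambda>x. - h x) has_real_derivative - h' v) (at v within {0..<r})"
    using d1 by (auto intro: DERIV_minus)
  obtain z where z: "z \<in> {u..<r}" "h z > h u"
    using blowup_unbounded[OF blowup, of u "h u"] u by auto
  have "\<forall>w\<in>{u<..<z}. 0 \<le> - h' w"
    using neg z by (fastforce intro: less_imp_le)
  then have "- h u \<le> - h z"
    by (rule mono_halfopen[OF minus_deriv]) (use u z in auto)
  then show False
    using z by simp
qed

lemma h''_pos:
  assumes u: "u \<in> {0<..<r}"
  shows "h'' u > 0"
proof -
  have "h'' u * h' u ^ (n - 1) > 0"
    using ode u D_pos[of u] by simp
  moreover have "h' u ^ (n - 1) > 0"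
    using h'_pos[OF u] by simp
  ultimately show ?thesis
    by (metis zero_less_mult_pos2)
qed

lemma h_increasing:
  assumes "0 \<le> a" "a \<le> b" "b < r"
  shows "h a \<le> h b"
  by (rule mono_halfopen[OF d1]) (use assms h'_pos in \<open>auto simp: less_imp_le\<close>)

lemma h'_increasing:
  assumes "0 \<le> a" "a \<le> b" "b < r"
  shows "h' a \<le> h' b"
  by (rule mono_halfopen[OF d2]) (use assms h''_pos in \<open>auto simp: less_imp_le\<close>)

lemma h_min: "(INF u\<in>{0..<r}. h u) = h 0"
  by (rule cInf_eq_minimum) (use r h_increasing in auto)

lemma h'_formula:
  assumes t: "t \<in> {0<..<r}"
  shows "h' t = (integral {0..t} (\<lambda>u. real n * exp (lam * h u) * D u)) powr (1 / real n)"
proof -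
  have "(h' t ^ n) powr (1 / real n) = h' t powr (real n * (1 / real n))"
    using h'_pos[OF t] by (simp add: powr_realpow[symmetric] powr_powr)
  also have "\<dots> = h' t"
    using n h'_pos[OF t] by simp
  finally show ?thesis
    using h'_power_integral t by simp
qed

text \<open>h' is unbounded near r: otherwise h would grow at most
  linearly, contradicting the blow-up.\<close>
lemma h'_unbounded: "\<exists>a\<in>{0<..<r}. h' a > B"
proof (rule ccontr)
  assume "\<not> ?thesis"
  then have bounded: "\<forall>a\<in>{0<..<r}. h' a \<le> max B 0"
    by force
  have "h u \<le> h 0 + max B 0 * r" if u: "u \<in> {0..<r}" for u
  proof -
    have "\<forall>v\<in>{0..<r}. ((\<lambda>x. max B 0 * x - h x) has_real_derivative max B 0 - h' v)
        (at v within {0..<r})"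
      using d1 by (auto intro!: derivative_eq_intros)
    then have "max B 0 * 0 - h 0 \<le> max B 0 * u - h u"
      by (rule mono_halfopen) (use bounded u in auto)
    moreover have "max B 0 * u \<le> max B 0 * r"
      using u by (simp add: mult_left_mono)
    ultimately show ?thesis
      by simp
  qed
  then show False
    using blowup_unbounded[OF blowup r, of "h 0 + max B 0 * r"] by force
qed

lemma h'_tendsto: "filterlim h' at_top (at_left r)"
  unfolding filterlim_at_top
proof
  fix B :: real
  obtain a where a: "a \<in> {0<..<r}" "h' a > B"
    using h'_unbounded by blast
  have "\<forall>\<^sub>F x in at_left r. x \<in> {a<..<r}"
    using eventually_at_left_real a by simp
  then show "\<forall>\<^sub>F x in at_left r. B \<le> h' x"
  proof (rule eventually_mono)
    fix x assume "x \<in> {a<..<r}"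
    then have "h' a \<le> h' x"
      using h'_increasing[of a x] a by simp
    then show "B \<le> h' x"
      using a by simp
  qed
qed

text \<open>A priori bound: if D \<le> K on [0, r] and c = (n + 1) K / lam, then
  c exp (lam h) - h'^(n+1) is non-negative at 0 and non-decreasing (its derivative is
  (n + 1) h' exp (lam h) (K - D) by the ODE), hence h'^(n+1) \<le> c exp (lam h).\<close>
lemma h'_power_bound:
  assumes K: "K > 0" "\<forall>v\<in>{0..r}. D v \<le> K"
    and u: "u \<in> {0..<r}"
  shows "h' u ^ (n + 1) \<le> (real n + 1) * K / lam * exp (lam * h u)"
proof -
  define c where "c = (real n + 1) * K / lam"
  define \<phi> where "\<phi> v = c * exp (lam * h v) - h' v ^ (n + 1)" for v
  define \<phi>' where "\<phi>' v = c * (exp (lam * h v) * (lam * h' v)) - real (n + 1) * h' v ^ n * h'' v" for v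
  have deriv: "\<forall>v\<in>{0..<r}. (\<phi> has_real_derivative \<phi>' v) (at v within {0..<r})"
  proof
    fix v assume v: "v \<in> {0..<r}"
    have "h' v ^ n = h' v * h' v ^ (n - 1)"
      using n by (cases n) auto
    then show "(\<phi> has_real_derivative \<phi>' v) (at v within {0..<r})"
      unfolding \<phi>_def \<phi>'_def using d1 d2 v
      by (auto intro!: derivative_eq_intros simp: algebra_simps)
  qed
  have \<phi>'_nonneg: "\<phi>' v \<ge> 0" if v: "v \<in> {0<..<u}" for v
  proof -
    have "0 < v" "v < r" "D v \<le> K"
      using v u K by auto
    have "h' v ^ n = h' v * h' v ^ (n - 1)"
      using n by (cases n) auto
    then have ode_v: "h' v ^ n * h'' v = h' v * (exp (lam * h v) * D v)"
      using ode \<open>0 < v\<close> \<open>v < r\<close> by (simp add: algebra_simps)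
    have c_lam: "c * lam = real (n + 1) * K"
      unfolding c_def using lam by simp
    have "\<phi>' v = (c * lam) * (h' v * exp (lam * h v)) - real (n + 1) * (h' v ^ n * h'' v)"
      unfolding \<phi>'_def by (simp add: algebra_simps)
    also have "\<dots> = real (n + 1) * K * (h' v * exp (lam * h v))
        - real (n + 1) * (h' v * (exp (lam * h v) * D v))"
      unfolding c_lam ode_v ..
    also have "\<dots> = h' v * exp (lam * h v) * (real (n + 1) * (K - D v))"
      by (simp add: algebra_simps)
    finally show ?thesis
      using h'_pos[of v] \<open>0 < v\<close> \<open>v < r\<close> \<open>D v \<le> K\<close> by simp
  qed
  have "\<phi> 0 \<le> \<phi> u"
    by (rule mono_halfopen[OF deriv]) (use \<phi>'_nonneg u in auto)
  moreover have "\<phi> 0 \<ge> 0"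
    unfolding \<phi>_def c_def using h'_0 K lam by simp
  ultimately show ?thesis
    unfolding \<phi>_def c_def by simp
qed

text \<open>Near r the ODE and the a priori bound give h'' \<ge> (d / c) h'^2
  with d = D(r)/2 > 0.\<close>
lemma h''_tendsto: "filterlim h'' at_top (at_left r)"
  unfolding filterlim_at_top
proof
  fix Z :: real
  obtain K where K: "K > 0" "\<forall>v\<in>{0..r}. D v \<le> K"
  proof -
    obtain b where "b > 0" "\<forall>x\<in>D ` {0..r}. norm x \<le> b"
      using compact_imp_bounded[OF compact_continuous_image[OF D_cont compact_Icc]] bounded_pos
      by blast
    then show ?thesis
      using that[of b] by force
  qed
  define c where "c = (real n + 1) * K / lam"
  define d where "d = D r / 2"
  have c: "c > 0" and d: "d > 0"
    using K lam D_pos[of r] r by (simp_all add: c_def d_def)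
  have "(D \<longlongrightarrow> D r) (at_left r)"
    using D_cont r by (simp add: continuous_on_Icc_at_leftD)
  then have D_near_r: "\<forall>\<^sub>F x in at_left r. d < D x"
    using d by (intro order_tendstoD(1)) (auto simp: d_def)
  have h'_large: "\<forall>\<^sub>F x in at_left r. max 1 (Z * c / d) \<le> h' x"
    using h'_tendsto filterlim_at_top by blast
  have inside: "\<forall>\<^sub>F x in at_left r. x \<in> {0<..<r}"
    using eventually_at_left_real r by simp
  show "\<forall>\<^sub>F x in at_left r. Z \<le> h'' x"
    using eventually_conj[OF h'_large eventually_conj[OF inside D_near_r]]
  proof (rule eventually_mono)
    fix x assume x: "max 1 (Z * c / d) \<le> h' x \<and> x \<in> {0<..<r} \<and> d < D x"
    have pos: "h' x ^ (n - 1) > 0"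
      using x by simp
    have "h' x ^ 2 * h' x ^ (n - 1) = h' x ^ (n + 1)"
      using n by (simp add: power_add[symmetric])
    also have "\<dots> \<le> c * exp (lam * h x)"
      using h'_power_bound[OF K] x unfolding c_def by auto
    also have "\<dots> \<le> c / d * (exp (lam * h x) * D x)"
      using x c d by (simp add: field_simps less_imp_le)
    also have "\<dots> = c / d * (h'' x * h' x ^ (n - 1))"
      using ode x by auto
    finally have "(d / c * h' x ^ 2) * h' x ^ (n - 1) \<le> h'' x * h' x ^ (n - 1)"
      using c d by (simp add: field_simps)
    then have "d / c * h' x ^ 2 \<le> h'' x"
      using pos by (rule mult_right_le_imp_le)
    moreover have "Z \<le> d / c * h' x"
      using x c d by (simp add: field_simps)
    moreover have "d / c * h' x \<le> d / c * h' x ^ 2"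
      using x c d by (intro mult_left_mono) (auto simp: power2_eq_square)
    ultimately show "Z \<le> h'' x"
      by linarith
  qed
qed

end

section \<open>The symmetric spaces\<close>

lemma D_M_pos:
  assumes "0 < u" "ereal u < r_max M"
  shows "D_M M n u > 0"
proof (cases M)
  case RealHyperbolic
  then show ?thesis
    using assms by (simp add: sin_gt_zero)
qed (use assms in \<open>auto simp: sinh_real_pos_iff cosh_real_pos\<close>)

lemma D_M_continuous: "continuous_on S (D_M M n)"
  by (cases M) (auto intro!: continuous_intros)

theorem proposition2p1:
  fixes M :: symspace and n :: nat and lam r :: real
    and h h' h'' :: "real \<Rightarrow> real"
  assumes n: "n \<ge> 2" and dim: "valid_dim M n"
    and lam: "lam > 0"
    and r: "0 < r" "ereal r < r_max M"
    and d1: "\<forall>u\<in>{0..<r}. (h has_real_derivative h' u) (at u within {0..<r})"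
    and d2: "\<forall>u\<in>{0..<r}. (h' has_real_derivative h'' u) (at u within {0..<r})"
    and ode: "\<forall>u\<in>{0..<r}. h'' u * (h' u) ^ (n - 1) = exp (lam * h u) * D_M M n u"
    and blowup: "filterlim h at_top (at_left r)"
    and analytic: "\<exists>g. real_analytic_on g {0..<r\<^sup>2} \<and> (\<forall>u\<in>{0..<r}. h u = g (u\<^sup>2))"
  shows "(\<forall>u\<in>{0<..<r}. h' u > 0 \<and> h'' u > 0) \<and> (INF u\<in>{0..<r}. h u) = h 0
       \<and> h' 0 = 0
       \<and> (\<forall>t\<in>{0<..<r}. h' t = (integral {0..t} (\<lambda>u. real n * exp (lam * h u) * D_M M n u)) powr (1 / real n))
       \<and> filterlim h' at_top (at_left r) \<and> filterlim h'' at_top (at_left r)"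
proof -
  obtain g where g: "real_analytic_on g {0..<r\<^sup>2}" "\<forall>u\<in>{0..<r}. h u = g (u\<^sup>2)"
    using analytic by blast
  have "0 \<in> {0..<r\<^sup>2}"
    using r by simp
  then obtain g0 where "(g has_real_derivative g0) (at 0)"
    using real_analytic_on_imp_DERIV[OF g(1)] by blast
  then have h'_0: "h' 0 = 0"
    using deriv_zero_of_square_composition g(2) r d1 by auto
  have D_pos: "D_M M n u > 0" if "0 < u" "u \<le> r" for u
    using D_M_pos that r(2) by (meson ereal_less_eq(3) le_less_trans)
  interpret blowup_solution n lam r "D_M M n" h h' h''
    using n lam r(1) D_M_continuous D_pos d1 d2 ode blowup h'_0 by unfold_locales auto
  show ?thesis
    using h'_pos h''_pos h_min h'_0 h'_formula h'_tendsto h''_tendsto by blast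
qed

end
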